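(* For every input permutation, algorithm $\mathcal{D}^2\mathcal{I}$ executes its instruction 6 only at steps where $D_2$ is empty.
   Context: The $\mathfrak{D}^2\mathfrak{I}$ machine consists of two decreasing stacks $D_1,D_2$ followed in series by an increasing stack $I$. Elements of $D_1,D_2$ must be in decreasing order from top to bottom (top largest); elements of $I$ in increasing order from top to bottom (top smallest). Operations: $d_0$ pushes the next input element (called $Input$) into $D_1$; $d_1$ moves $Top(D_1)$ to $D_2$; $d_2$ moves $Top(D_2)$ to $I$; $d_3$ pops $Top(I)$ and appends it to the output. Any comparison involving an empty stack is considered true. Conditions: ($\alpha$) $Top(D_2)<Top(I)$; ($\beta$) $Top(D_2)<Top(D_1)$ and $Top(D_1)<Top(I)$; ($\gamma$) $Top(D_1)<Input$, $Input<Top(I)$, and the sequence of input elements from $Input$ up to the first input element larger than $Top(D_2)$ is increasing. Algorithm $\mathcal{D}^2\mathcal{I}$ repeatedly executes the first applicable instruction among: 1. if $Top(I)$ is the next element to be output, perform $d_3$; 2. if the elements contained in $D_1\cup D_2$ are exactly the next elements to be output, move them to the output in increasing order; 3. perform $d_1$ if it is legal and ($\beta$) holds; 4. perform $d_0$ if it is legal and ($\gamma$) holds; 5. perform $d_2$ if it is legal and ($\alpha$) holds; 6. otherwise perform $d_3$. *)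

theory Defs
  imports Main
begin

text \<open>Stacks are lists whose head is the top element. The input is a list whose head
  is the next input element (Input).
  The input is a permutation of 1..n, so the next element to be output is
  length(output) + 1.\<close>

record state =
  inp :: "nat list"
  D1  :: "nat list"
  D2  :: "nat list"
  I   :: "nat list"
  out :: "nat list"

definition init :: "nat list \<Rightarrow> state" where
  "init \<pi> = \<lparr>inp = \<pi>, D1 = [], D2 = [], I = [], out = []\<rparr>"

definition is_perm_input :: "nat list \<Rightarrow> bool" where
  "is_perm_input \<pi> \<longleftrightarrow> distinct \<pi> \<and> set \<pi> = {1..length \<pi>}"

text \<open>Comparison of tops; any comparison involving an empty stack is true.\<close>
definition ltT :: "nat list \<Rightarrow> nat list \<Rightarrow> bool" where
  "ltT xs ys \<longleftrightarrow> xs = [] \<or> ys = [] \<or> hd xs < hd ys"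

definition nxt :: "state \<Rightarrow> nat" where
  "nxt s = Suc (length (out s))"

definition legal_d0 :: "state \<Rightarrow> bool" where
  "legal_d0 s \<longleftrightarrow> inp s \<noteq> [] \<and> ltT (D1 s) (inp s)"
definition legal_d1 :: "state \<Rightarrow> bool" where
  "legal_d1 s \<longleftrightarrow> D1 s \<noteq> [] \<and> ltT (D2 s) (D1 s)"
definition legal_d2 :: "state \<Rightarrow> bool" where
  "legal_d2 s \<longleftrightarrow> D2 s \<noteq> [] \<and> ltT (D2 s) (I s)"
definition legal_d3 :: "state \<Rightarrow> bool" where
  "legal_d3 s \<longleftrightarrow> I s \<noteq> []"

definition op_d0 :: "state \<Rightarrow> state" where
  "op_d0 s = s\<lparr>inp := tl (inp s), D1 := hd (inp s) # D1 s\<rparr>"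
definition op_d1 :: "state \<Rightarrow> state" where
  "op_d1 s = s\<lparr>D1 := tl (D1 s), D2 := hd (D1 s) # D2 s\<rparr>"
definition op_d2 :: "state \<Rightarrow> state" where
  "op_d2 s = s\<lparr>D2 := tl (D2 s), I := hd (D2 s) # I s\<rparr>"
definition op_d3 :: "state \<Rightarrow> state" where
  "op_d3 s = s\<lparr>I := tl (I s), out := out s @ [hd (I s)]\<rparr>"

definition cond_alpha :: "state \<Rightarrow> bool" where
  "cond_alpha s \<longleftrightarrow> ltT (D2 s) (I s)"
definition cond_beta :: "state \<Rightarrow> bool" where
  "cond_beta s \<longleftrightarrow> ltT (D2 s) (D1 s) \<and> ltT (D1 s) (I s)"

text \<open>The input segment from Input up to (and including) the first input element
  larger than Top(D2) (the whole remaining input if there is none; just Input if D2 is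
  empty, since comparisons with an empty stack are true).\<close>
definition gamma_seg :: "state \<Rightarrow> nat list" where
  "gamma_seg s = (case D2 s of [] \<Rightarrow> take 1 (inp s)
     | t # _ \<Rightarrow> take (Suc (length (takeWhile (\<lambda>x. \<not> t < x) (inp s)))) (inp s))"
definition cond_gamma :: "state \<Rightarrow> bool" where
  "cond_gamma s \<longleftrightarrow> ltT (D1 s) (inp s) \<and> ltT (inp s) (I s)
      \<and> sorted_wrt (<) (gamma_seg s)"

definition instr1 :: "state \<Rightarrow> bool" where
  "instr1 s \<longleftrightarrow> I s \<noteq> [] \<and> hd (I s) = nxt s"
definition instr2 :: "state \<Rightarrow> bool" where
  "instr2 s \<longleftrightarrow> D1 s @ D2 s \<noteq> [] \<and>
     set (D1 s) \<union> set (D2 s) = {nxt s..<nxt s + length (D1 s) + length (D2 s)}"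
definition instr3 :: "state \<Rightarrow> bool" where
  "instr3 s \<longleftrightarrow> legal_d1 s \<and> cond_beta s"
definition instr4 :: "state \<Rightarrow> bool" where
  "instr4 s \<longleftrightarrow> legal_d0 s \<and> cond_gamma s"
definition instr5 :: "state \<Rightarrow> bool" where
  "instr5 s \<longleftrightarrow> legal_d2 s \<and> cond_alpha s"

definition instr6 :: "state \<Rightarrow> bool" where
  "instr6 s \<longleftrightarrow> \<not> instr1 s \<and> \<not> instr2 s \<and> \<not> instr3 s \<and> \<not> instr4 s \<and> \<not> instr5 s"

definition step :: "state \<Rightarrow> state option" where
  "step s =
    (if instr1 s then Some (op_d3 s)
     else if instr2 s then Some (s\<lparr>D1 := [], D2 := [], out := out s @ sort (D1 s @ D2 s)\<rparr>)
     else if instr3 s then Some (op_d1 s)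
     else if instr4 s then Some (op_d0 s)
     else if instr5 s then Some (op_d2 s)
     else if legal_d3 s then Some (op_d3 s) else None)"

definition reachable :: "nat list \<Rightarrow> state \<Rightarrow> bool" where
  "reachable \<pi> s \<longleftrightarrow> (init \<pi>, s) \<in> {(a, b). step a = Some b}\<^sup>*"

end

theory Submission
  imports Defs
begin

text \<open>Throughout the run, D2 is decreasing, I is increasing and Top(D2) < Top(I). Instruction 5
  performs d2 exactly when D2 is nonempty and Top(D2) < Top(I); so whenever instruction 6 is
  reached with D2 nonempty, instruction 5 would have applied instead. The invariant is a purely
  order-theoretic property of the machine and does not depend on the input being a permutation.\<close>

definition stacks_ordered :: "state \<Rightarrow> bool" where
  "stacks_ordered s \<longleftrightarrow> sorted_wrt (>) (D2 s) \<and> sorted_wrt (<) (I s) \<and> ltT (D2 s) (I s)"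

lemma ltT_tl_right:
  fixes xs ys :: "nat list"
  assumes "sorted_wrt (<) xs" and "ltT ys xs"
  shows "ltT ys (tl xs)"
  using assms by (cases xs; cases "tl xs"; cases ys) (auto simp: ltT_def)

lemma ltT_tl_hd_Cons:
  fixes xs ys :: "nat list"
  assumes "sorted_wrt (>) xs"
  shows "ltT (tl xs) (hd xs # ys)"
  using assms by (cases xs; cases "tl xs") (auto simp: ltT_def)

lemma sorted_wrt_less_Cons_ltT:
  fixes ys :: "nat list"
  assumes "sorted_wrt (<) ys" and "ltT [x] ys"
  shows "sorted_wrt (<) (x # ys)"
  using assms by (cases ys) (auto simp: ltT_def)

lemma sorted_wrt_greater_Cons_ltT:
  fixes ys :: "nat list"
  assumes "sorted_wrt (>) ys" and "ltT ys [x]"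
  shows "sorted_wrt (>) (x # ys)"
  using assms by (cases ys) (auto simp: ltT_def)

lemma stacks_ordered_op_d0:
  "stacks_ordered s \<Longrightarrow> stacks_ordered (op_d0 s)"
  by (simp add: stacks_ordered_def op_d0_def)

lemma stacks_ordered_op_d1:
  assumes "stacks_ordered s" and "instr3 s"
  shows "stacks_ordered (op_d1 s)"
proof -
  obtain x xs where D1: "D1 s = x # xs"
    using assms(2) by (cases "D1 s") (auto simp: instr3_def legal_d1_def)
  have "ltT (D2 s) [x]" and "ltT [x] (I s)"
    using assms(2) D1 by (auto simp: instr3_def cond_beta_def ltT_def)
  then show ?thesis
    using assms(1) D1 sorted_wrt_greater_Cons_ltT[of "D2 s" x]
    by (auto simp: stacks_ordered_def op_d1_def ltT_def)
qed

lemma stacks_ordered_op_d2: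
  assumes "stacks_ordered s" and "legal_d2 s"
  shows "stacks_ordered (op_d2 s)"
proof -
  obtain x xs where D2: "D2 s = x # xs"
    using assms(2) by (cases "D2 s") (auto simp: legal_d2_def)
  have "ltT [x] (I s)"
    using assms(2) D2 by (simp add: legal_d2_def ltT_def)
  then show ?thesis
    using assms(1) D2 sorted_wrt_less_Cons_ltT[of "I s" x] ltT_tl_hd_Cons[of "D2 s" "I s"]
    by (simp add: stacks_ordered_def op_d2_def)
qed

lemma stacks_ordered_op_d3:
  "stacks_ordered s \<Longrightarrow> stacks_ordered (op_d3 s)"
  using ltT_tl_right[of "I s" "D2 s"]
  by (cases "I s") (auto simp: stacks_ordered_def op_d3_def)

lemma stacks_ordered_flush:
  "stacks_ordered s \<Longrightarrow> stacks_ordered (s\<lparr>D1 := [], D2 := [], out := out'\<rparr>)"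
  by (simp add: stacks_ordered_def ltT_def)

lemma stacks_ordered_step:
  assumes "stacks_ordered s" and "step s = Some t"
  shows "stacks_ordered t"
  using assms(2) stacks_ordered_op_d0[OF assms(1)] stacks_ordered_op_d1[OF assms(1)]
    stacks_ordered_op_d2[OF assms(1)] stacks_ordered_op_d3[OF assms(1)]
    stacks_ordered_flush[OF assms(1)]
  by (auto simp: step_def instr5_def split: if_splits)

lemma stacks_ordered_reachable:
  assumes "reachable \<pi> s"
  shows "stacks_ordered s"
proof -
  have "stacks_ordered (init \<pi>)"
    by (simp add: stacks_ordered_def init_def ltT_def)
  with assms show ?thesis
    unfolding reachable_def
    by (induction rule: rtrancl_induct) (auto intro: stacks_ordered_step)
qed

lemma D2_empty_if_instr6:
  assumes "stacks_ordered s" and "instr6 s"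
  shows "D2 s = []"
  using assms
  by (auto simp: stacks_ordered_def instr6_def instr5_def legal_d2_def cond_alpha_def)

theorem mainTheorem6:
  fixes \<pi> :: "nat list" and s :: state
  assumes "is_perm_input \<pi>" and "reachable \<pi> s" and "instr6 s"
  shows "D2 s = []"
  using D2_empty_if_instr6[OF stacks_ordered_reachable[OF assms(2)] assms(3)] .

end
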